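(* Let $(\mu_i,\mathcal{S}_i,L_i,\pi_i)_{i=1}^n$ be irreducible, reversible continuous-time finite Markov chains, $p_1,\dots,p_n>0$ with $\sum_ip_i\le1$, and $(\mu,\mathcal{S},L,\pi)$ the product chain. With $\varrho_l,\rho_l,\psi_l,\varphi_l,j(c),\tilde j(c)$ as defined in the context, \[\varrho_{j(c)}\le\rho_{\tilde j(c)}\le\varrho_{j(e^c-1)}\quad\text{for all }c>0,\] with the conventions $\min\emptyset=\infty$ (and the corresponding eigenvalue $=\infty$).
   Context: Product chain: $\mathcal{S}=\prod_{i=1}^n\mathcal{S}_i$, $\mu=\prod_i\mu_i$, $\pi=\prod_i\pi_i$, $L=\sum_{i=1}^np_iI_1\otimes\cdots\otimes I_{i-1}\otimes L_i\otimes I_{i+1}\otimes\cdots\otimes I_n$. Let $0=\lambda_{i,0}\le\lambda_{i,1}\le\dots\le\lambda_{i,|\mathcal{S}_i|-1}$ be the eigenvalues of $-L_i$ with $L^2(\pi_i)$-orthonormal right eigenvectors $\phi_{i,0}=\mathbf1,\phi_{i,1},\dots$. Let $\Gamma=\{J=(j_1,\dots,j_n):0\le j_i<|\mathcal{S}_i|\}$, and for $J\in\Gamma$ set $\lambda_J=\sum_ip_i\lambda_{i,j_i}$, $\phi_J=\prod_i\phi_{i,j_i}$ (tensor product), and $\mu(\phi_J)=\prod_i\mu_i(\phi_{i,j_i})$ where $\mu_i(\phi)=\sum_x\mu_i(x)\phi(x)$. Enumerate $\{\lambda_J:J\in\Gamma,J\ne\mathbf0\}$ as $\varrho_1\le\varrho_2\le\cdots$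 with $\psi_l$ the corresponding $\mu(\phi_J)$; enumerate $\{p_i\lambda_{i,j}:1\le j<|\mathcal{S}_i|,1\le i\le n\}$ as $\rho_1\le\rho_2\le\cdots$ with $\varphi_l$ the corresponding $\mu_i(\phi_{i,j})$. For $c>0$: $j(c)=\min\{j\ge1:\sum_{l=1}^j\psi_l^2>c\}$ and $\tilde j(c)=\min\{j\ge1:\sum_{l=1}^j\varphi_l^2>c\}$. *)

theory Defs
  imports "HOL-Analysis.Analysis" "HOL-Library.Extended_Nat" "HOL-Library.Extended_Real"
begin

definition generator :: "'s set \<Rightarrow> ('s \<Rightarrow> 's \<Rightarrow> real) \<Rightarrow> bool" where
  "generator S L \<longleftrightarrow> finite S \<and> S \<noteq> {} \<and>
     (\<forall>x\<in>S. \<forall>y\<in>S. x \<noteq> y \<longrightarrow> L x y \<ge> 0) \<and>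
     (\<forall>x\<in>S. (\<Sum>y\<in>S. L x y) = 0)"

definition irreducible_gen :: "'s set \<Rightarrow> ('s \<Rightarrow> 's \<Rightarrow> real) \<Rightarrow> bool" where
  "irreducible_gen S L \<longleftrightarrow>
     (\<forall>x\<in>S. \<forall>y\<in>S. x \<noteq> y \<longrightarrow> (x, y) \<in> {(u, v). u \<in> S \<and> v \<in> S \<and> u \<noteq> v \<and> L u v > 0}\<^sup>+)"

definition prob_dist :: "'s set \<Rightarrow> ('s \<Rightarrow> real) \<Rightarrow> bool" where
  "prob_dist S m \<longleftrightarrow> (\<forall>x\<in>S. m x \<ge> 0) \<and> (\<Sum>x\<in>S. m x) = 1"

definition stationary :: "'s set \<Rightarrow> ('s \<Rightarrow> 's \<Rightarrow> real) \<Rightarrow> ('s \<Rightarrow> real) \<Rightarrow> bool" where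
  "stationary S L pd \<longleftrightarrow> prob_dist S pd \<and> (\<forall>y\<in>S. (\<Sum>x\<in>S. pd x * L x y) = 0)"

definition reversible :: "'s set \<Rightarrow> ('s \<Rightarrow> 's \<Rightarrow> real) \<Rightarrow> ('s \<Rightarrow> real) \<Rightarrow> bool" where
  "reversible S L pd \<longleftrightarrow> (\<forall>x\<in>S. \<forall>y\<in>S. pd x * L x y = pd y * L y x)"

definition eigen_decomp ::
  "'s set \<Rightarrow> ('s \<Rightarrow> 's \<Rightarrow> real) \<Rightarrow> ('s \<Rightarrow> real) \<Rightarrow> (nat \<Rightarrow> real) \<Rightarrow> (nat \<Rightarrow> 's \<Rightarrow> real) \<Rightarrow> bool" where
  "eigen_decomp S L pd lam phi \<longleftrightarrow>
     lam 0 = 0 \<and> (\<forall>x\<in>S. phi 0 x = 1) \<and>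
     (\<forall>j k. j \<le> k \<and> k < card S \<longrightarrow> lam j \<le> lam k) \<and>
     (\<forall>j < card S. \<forall>x\<in>S. (\<Sum>y\<in>S. L x y * phi j y) = - lam j * phi j x) \<and>
     (\<forall>j < card S. \<forall>k < card S. (\<Sum>x\<in>S. pd x * phi j x * phi k x) = (if j = k then 1 else 0))"

definition first_index :: "nat \<Rightarrow> (nat \<Rightarrow> real) \<Rightarrow> real \<Rightarrow> enat" where
  "first_index M psi c =
     (if \<exists>j. 1 \<le> j \<and> j \<le> M \<and> (\<Sum>l=1..j. (psi l)\<^sup>2) > c
      then enat (LEAST j. 1 \<le> j \<and> j \<le> M \<and> (\<Sum>l=1..j. (psi l)\<^sup>2) > c)
      else \<infinity>)"

definition val_at :: "(nat \<Rightarrow> real) \<Rightarrow> enat \<Rightarrow> ereal" where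
  "val_at rho k = (case k of enat j \<Rightarrow> ereal (rho j) | \<infinity> \<Rightarrow> \<infinity>)"

end

theory Submission
  imports Defs
begin

(* Both eigenvalues in the statement are quantiles of spectral mass functions:
   val_at f (first_index N g c) is the least f_l at which the mass of g^2 on the sublevel set
   {l. f l <= r} exceeds c.  So it suffices to compare the mass F r of the product spectrum with
   the mass G r of the pooled coordinate spectra.  The single-coordinate multi-indices
   J = (0,..,0,j,0,..,0) have lambda_J = p_i lambda_(i,j) and mu(phi_J) = mu_i(phi_(i,j)), since
   mu_k(phi_(k,0)) = 1; hence G <= F.  Conversely lambda_J <= r forces p_i lambda_(i,J_i) <= r in
   every coordinate, so the J below r lie in a product of coordinate sublevel sets, whose mass
   factorises: 1 + F r <= prod_i (1 + G_i r) <= exp (G r). *)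

definition sublevel_mass :: "'a set \<Rightarrow> ('a \<Rightarrow> real) \<Rightarrow> ('a \<Rightarrow> real) \<Rightarrow> real \<Rightarrow> real" where
  "sublevel_mass A f g r = (\<Sum>a\<in>{a\<in>A. f a \<le> r}. (g a)\<^sup>2)"

lemma sublevel_mass_reindex:
  assumes "bij_betw h A B"
  shows "sublevel_mass A (\<lambda>a. f (h a)) (\<lambda>a. g (h a)) r = sublevel_mass B f g r"
proof -
  have "bij_betw h {a\<in>A. f (h a) \<le> r} {b\<in>B. f b \<le> r}"
    using assms by (auto simp: bij_betw_def inj_on_def)
  then show ?thesis
    unfolding sublevel_mass_def by (rule sum.reindex_bij_betw)
qed

lemma first_index_enatD:
  assumes "first_index N g c = enat t"
  shows "1 \<le> t" "t \<le> N" "c < (\<Sum>l=1..t. (g l)\<^sup>2)"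
proof -
  have ex: "\<exists>j. 1 \<le> j \<and> j \<le> N \<and> c < (\<Sum>l=1..j. (g l)\<^sup>2)"
    using assms unfolding first_index_def by (auto split: if_splits)
  then have "t = (LEAST j. 1 \<le> j \<and> j \<le> N \<and> c < (\<Sum>l=1..j. (g l)\<^sup>2))"
    using assms unfolding first_index_def by auto
  with LeastI_ex[OF ex] show "1 \<le> t" "t \<le> N" "c < (\<Sum>l=1..t. (g l)\<^sup>2)"
    by simp_all
qed

lemma first_index_le:
  assumes "1 \<le> j" "j \<le> N" "c < (\<Sum>l=1..j. (g l)\<^sup>2)"
  shows "first_index N g c \<le> enat j"
proof -
  have "\<exists>j. 1 \<le> j \<and> j \<le> N \<and> c < (\<Sum>l=1..j. (g l)\<^sup>2)"
    using assms by blast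
  then show ?thesis
    unfolding first_index_def using assms by (auto intro: Least_le)
qed

lemma sublevel_mass_at_first_index:
  assumes "mono_on {1..N} f" "first_index N g c = enat t"
  shows "c < sublevel_mass {1..N} f g (f t)"
proof -
  note t = first_index_enatD[OF assms(2)]
  have "{1..t} \<subseteq> {l\<in>{1..N}. f l \<le> f t}"
    using t by (auto intro: mono_onD[OF assms(1)])
  then have "(\<Sum>l=1..t. (g l)\<^sup>2) \<le> sublevel_mass {1..N} f g (f t)"
    unfolding sublevel_mass_def by (intro sum_mono2) auto
  with t(3) show ?thesis by linarith
qed

lemma val_at_first_index_le:
  assumes mono: "mono_on {1..N} f" and "0 \<le> c" and mass: "c < sublevel_mass {1..N} f g r"
  shows "val_at f (first_index N g c) \<le> ereal r"
proof -
  define A where "A = {l\<in>{1..N}. f l \<le> r}"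
  have "A \<noteq> {}"
    using assms(2) mass unfolding sublevel_mass_def A_def[symmetric] by auto
  moreover have "finite A"
    unfolding A_def by simp
  ultimately have K: "Max A \<in> A" "A \<subseteq> {1..Max A}"
    by (simp, auto simp: A_def)
  then have "sublevel_mass {1..N} f g r \<le> (\<Sum>l=1..Max A. (g l)\<^sup>2)"
    unfolding sublevel_mass_def A_def[symmetric] by (intro sum_mono2) auto
  with mass have "c < (\<Sum>l=1..Max A. (g l)\<^sup>2)"
    by linarith
  then have "first_index N g c \<le> enat (Max A)"
    using K by (intro first_index_le) (auto simp: A_def)
  then obtain t where t: "first_index N g c = enat t" "t \<le> Max A"
    by (cases "first_index N g c") auto
  then have "f t \<le> f (Max A)"
    using first_index_enatD[OF t(1)] K unfolding A_def by (auto intro: mono_onD[OF mono])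
  with K show ?thesis
    using t unfolding A_def val_at_def by simp
qed

lemma val_at_first_index_mono:
  assumes "mono_on {1..N} f" "mono_on {1..N'} f'" "0 \<le> c"
    and mass: "\<And>r. c' < sublevel_mass {1..N'} f' g' r \<Longrightarrow> c < sublevel_mass {1..N} f g r"
  shows "val_at f (first_index N g c) \<le> val_at f' (first_index N' g' c')"
proof (cases "first_index N' g' c'")
  case (enat t)
  have "c < sublevel_mass {1..N} f g (f' t)"
    using mass sublevel_mass_at_first_index[OF assms(2) enat] .
  with assms(1,3) enat show ?thesis
    using val_at_first_index_le by (simp add: val_at_def)
qed (simp add: val_at_def)

lemma sum_PiE_prod_le_exp_sum:
  fixes w :: "'a \<Rightarrow> 'b \<Rightarrow> real"
  assumes "finite I"
    and "\<And>i. i \<in> I \<Longrightarrow> finite (D i)" "\<And>i. i \<in> I \<Longrightarrow> b \<in> D i" "\<And>i. i \<in> I \<Longrightarrow> w i b = 1"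
    and "\<And>i j. i \<in> I \<Longrightarrow> j \<in> D i \<Longrightarrow> 0 \<le> w i j"
  shows "(\<Sum>J\<in>Pi\<^sub>E I D. \<Prod>i\<in>I. w i (J i)) \<le> exp (\<Sum>i\<in>I. \<Sum>j\<in>D i - {b}. w i j)"
proof -
  have "(\<Sum>J\<in>Pi\<^sub>E I D. \<Prod>i\<in>I. w i (J i)) = (\<Prod>i\<in>I. \<Sum>j\<in>D i. w i j)"
    using assms(1,2) by (rule prod_sum_PiE[symmetric])
  also have "\<dots> = (\<Prod>i\<in>I. 1 + (\<Sum>j\<in>D i - {b}. w i j))"
    using assms(2-4) by (intro prod.cong refl) (simp add: sum.remove[where x = b])
  also have "\<dots> \<le> (\<Prod>i\<in>I. exp (\<Sum>j\<in>D i - {b}. w i j))"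
    using assms(5) by (intro prod_mono conjI add_nonneg_nonneg sum_nonneg) auto
  also have "\<dots> = exp (\<Sum>i\<in>I. \<Sum>j\<in>D i - {b}. w i j)"
    using assms(1) by (simp add: exp_sum)
  finally show ?thesis .
qed

definition single_index :: "nat \<Rightarrow> nat \<times> nat \<Rightarrow> nat \<Rightarrow> nat" where
  "single_index n q = restrict (\<lambda>i. if i = fst q then snd q else 0) {..<n}"

lemma single_index_apply:
  "single_index n (i, j) i' = (if i' < n then if i' = i then j else 0 else undefined)"
  by (simp add: single_index_def)

lemma inj_on_single_index: "inj_on (single_index n) {(i, j). i < n \<and> 1 \<le> j}"
  by (rule inj_onI) (auto simp: single_index_def fun_eq_iff split: if_splits)

lemma single_index_mem:
  assumes "i < n" "1 \<le> j" "j < k i" "\<And>i. i < n \<Longrightarrow> 0 < k i"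
  shows "single_index n (i, j) \<in> Pi\<^sub>E {..<n} (\<lambda>i. {..<k i}) - {restrict (\<lambda>_. 0) {..<n}}"
  using assms by (auto simp: single_index_def dest: fun_cong[where x = i])

lemma sum_single_index:
  assumes "i < n" "\<And>i'. i' < n \<Longrightarrow> f i' 0 = 0"
  shows "(\<Sum>i'<n. f i' (single_index n (i, j) i')) = f i j"
proof -
  have "(\<Sum>i'<n. f i' (single_index n (i, j) i')) = (\<Sum>i'<n. if i' = i then f i j else 0)"
    using assms(2) by (intro sum.cong) (auto simp: single_index_apply)
  with assms(1) show ?thesis
    by simp
qed

lemma prod_single_index:
  assumes "i < n" "\<And>i'. i' < n \<Longrightarrow> f i' 0 = 1"
  shows "(\<Prod>i'<n. f i' (single_index n (i, j) i')) = f i j"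
proof -
  have "(\<Prod>i'<n. f i' (single_index n (i, j) i')) = (\<Prod>i'<n. if i' = i then f i j else 1)"
    using assms(2) by (intro prod.cong) (auto simp: single_index_apply)
  with assms(1) show ?thesis
    by simp
qed

lemma sublevel_mass_coordinates_le_product:
  fixes p :: "nat \<Rightarrow> real" and lam m :: "nat \<Rightarrow> nat \<Rightarrow> real"
  assumes "\<And>i. i < n \<Longrightarrow> 0 < k i" "\<And>i. i < n \<Longrightarrow> lam i 0 = 0" "\<And>i. i < n \<Longrightarrow> m i 0 = 1"
  shows "sublevel_mass {(i, j). i < n \<and> 1 \<le> j \<and> j < k i}
           (\<lambda>q. p (fst q) * lam (fst q) (snd q)) (\<lambda>q. m (fst q) (snd q)) r
       \<le> sublevel_mass (Pi\<^sub>E {..<n} (\<lambda>i. {..<k i}) - {restrict (\<lambda>_. 0) {..<n}})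
           (\<lambda>J. \<Sum>i<n. p i * lam i (J i)) (\<lambda>J. \<Prod>i<n. m i (J i)) r"
proof -
  define P where "P = {q \<in> {(i, j). i < n \<and> 1 \<le> j \<and> j < k i}. p (fst q) * lam (fst q) (snd q) \<le> r}"
  define Q where "Q = {J \<in> Pi\<^sub>E {..<n} (\<lambda>i. {..<k i}) - {restrict (\<lambda>_. 0) {..<n}}.
    (\<Sum>i<n. p i * lam i (J i)) \<le> r}"
  have inj: "inj_on (single_index n) P"
    by (rule inj_on_subset[OF inj_on_single_index]) (auto simp: P_def)
  have "single_index n q \<in> Q" if q: "q \<in> P" for q
  proof -
    obtain i j where "q = (i, j)" "i < n" "1 \<le> j" "j < k i" "p i * lam i j \<le> r"
      using q by (auto simp: P_def)
    then show ?thesis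
      using single_index_mem[of i n j k, OF _ _ _ assms(1)]
        sum_single_index[of i n "\<lambda>i j. p i * lam i j" j] assms(2)
      by (simp add: Q_def)
  qed
  then have "single_index n ` P \<subseteq> Q"
    by blast
  have "finite Q"
    unfolding Q_def by (rule finite_subset[of _ "Pi\<^sub>E {..<n} (\<lambda>i. {..<k i})"]) (auto intro: finite_PiE)
  have "(\<Sum>q\<in>P. (m (fst q) (snd q))\<^sup>2) = (\<Sum>q\<in>P. (\<Prod>i<n. m i (single_index n q i))\<^sup>2)"
    by (intro sum.cong refl) (auto simp: P_def prod_single_index assms(3))
  also have "\<dots> = (\<Sum>J\<in>single_index n ` P. (\<Prod>i<n. m i (J i))\<^sup>2)"
    by (simp add: sum.reindex[OF inj])
  also have "\<dots> \<le> (\<Sum>J\<in>Q. (\<Prod>i<n. m i (J i))\<^sup>2)"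
    using \<open>single_index n ` P \<subseteq> Q\<close> \<open>finite Q\<close> by (intro sum_mono2) auto
  finally show ?thesis
    unfolding sublevel_mass_def P_def Q_def .
qed

lemma PiE_coordinate_sublevel:
  fixes p :: "nat \<Rightarrow> real" and lam :: "nat \<Rightarrow> nat \<Rightarrow> real"
  assumes p: "\<And>i. i < n \<Longrightarrow> 0 \<le> p i" and lam: "\<And>i j. i < n \<Longrightarrow> j < k i \<Longrightarrow> 0 \<le> lam i j"
    and J: "J \<in> Pi\<^sub>E {..<n} (\<lambda>i. {..<k i})" "(\<Sum>i<n. p i * lam i (J i)) \<le> r"
  shows "J \<in> Pi\<^sub>E {..<n} (\<lambda>i. insert 0 {j. 1 \<le> j \<and> j < k i \<and> p i * lam i j \<le> r})"
proof (rule PiE_I)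
  fix i assume "i \<in> {..<n}"
  have J_bound: "J i' < k i'" if "i' < n" for i'
    using J(1) that by auto
  have "p i * lam i (J i) \<le> (\<Sum>i<n. p i * lam i (J i))"
    using \<open>i \<in> {..<n}\<close> by (rule member_le_sum) (simp_all add: p lam J_bound)
  also have "\<dots> \<le> r"
    by (fact J(2))
  finally show "J i \<in> insert 0 {j. 1 \<le> j \<and> j < k i \<and> p i * lam i j \<le> r}"
    using J_bound \<open>i \<in> {..<n}\<close> by (auto simp: Suc_le_eq)
next
  fix i assume "i \<notin> {..<n}"
  with J(1) show "J i = undefined"
    by (rule PiE_arb)
qed

lemma sublevel_mass_product_le_exp_coordinates:
  fixes p :: "nat \<Rightarrow> real" and lam m :: "nat \<Rightarrow> nat \<Rightarrow> real"
  assumes p: "\<And>i. i < n \<Longrightarrow> 0 \<le> p i" and lam: "\<And>i j. i < n \<Longrightarrow> j < k i \<Longrightarrow> 0 \<le> lam i j"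
    and m: "\<And>i. i < n \<Longrightarrow> m i 0 = 1"
  shows "1 + sublevel_mass (Pi\<^sub>E {..<n} (\<lambda>i. {..<k i}) - {restrict (\<lambda>_. 0) {..<n}})
               (\<lambda>J. \<Sum>i<n. p i * lam i (J i)) (\<lambda>J. \<Prod>i<n. m i (J i)) r
       \<le> exp (sublevel_mass {(i, j). i < n \<and> 1 \<le> j \<and> j < k i}
               (\<lambda>q. p (fst q) * lam (fst q) (snd q)) (\<lambda>q. m (fst q) (snd q)) r)"
proof -
  define E where "E i = {j. 1 \<le> j \<and> j < k i \<and> p i * lam i j \<le> r}" for i
  define D where "D i = insert 0 (E i)" for i
  define z where "z = restrict (\<lambda>_. 0::nat) {..<n}"
  define Q where "Q = {J \<in> Pi\<^sub>E {..<n} (\<lambda>i. {..<k i}) - {z}. (\<Sum>i<n. p i * lam i (J i)) \<le> r}"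
  have fin_E: "finite (E i)" for i
    by (rule finite_subset[of _ "{..<k i}"]) (auto simp: E_def)
  then have fin_D: "finite (D i)" for i
    by (simp add: D_def)
  have fin_PiE: "finite (Pi\<^sub>E {..<n} D)"
    using fin_D by (simp add: finite_PiE)
  have "J \<in> Pi\<^sub>E {..<n} D" if "J \<in> Q" for J
    unfolding D_def E_def using that by (intro PiE_coordinate_sublevel[OF p lam]) (auto simp: Q_def)
  then have Q_sub: "Q \<subseteq> Pi\<^sub>E {..<n} D - {z}"
    by (auto simp: Q_def)
  have z_in: "z \<in> Pi\<^sub>E {..<n} D"
    by (auto simp: z_def D_def)
  have E_Sigma: "{q \<in> {(i, j). i < n \<and> 1 \<le> j \<and> j < k i}. p (fst q) * lam (fst q) (snd q) \<le> r}
      = Sigma {..<n} E"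
    by (auto simp: E_def)
  have "sublevel_mass (Pi\<^sub>E {..<n} (\<lambda>i. {..<k i}) - {z})
      (\<lambda>J. \<Sum>i<n. p i * lam i (J i)) (\<lambda>J. \<Prod>i<n. m i (J i)) r
      = (\<Sum>J\<in>Q. \<Prod>i<n. (m i (J i))\<^sup>2)"
    unfolding sublevel_mass_def Q_def by (simp add: prod_power_distrib)
  also have "\<dots> \<le> (\<Sum>J\<in>Pi\<^sub>E {..<n} D - {z}. \<Prod>i<n. (m i (J i))\<^sup>2)"
    using Q_sub fin_PiE by (intro sum_mono2) (auto intro: prod_nonneg)
  also have "\<dots> = (\<Sum>J\<in>Pi\<^sub>E {..<n} D. \<Prod>i<n. (m i (J i))\<^sup>2) - 1"
    using fin_PiE z_in m by (simp add: sum_diff1 z_def)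
  also have "\<dots> \<le> exp (\<Sum>i<n. \<Sum>j\<in>D i - {0}. (m i j)\<^sup>2) - 1"
    using sum_PiE_prod_le_exp_sum[of "{..<n}" D 0 "\<lambda>i j. (m i j)\<^sup>2"] fin_D m
    by (simp add: D_def)
  also have "(\<Sum>i<n. \<Sum>j\<in>D i - {0}. (m i j)\<^sup>2) = (\<Sum>i<n. \<Sum>j\<in>E i. (m i j)\<^sup>2)"
    by (simp add: D_def E_def)
  also have "\<dots> = sublevel_mass {(i, j). i < n \<and> 1 \<le> j \<and> j < k i}
      (\<lambda>q. p (fst q) * lam (fst q) (snd q)) (\<lambda>q. m (fst q) (snd q)) r"
    unfolding sublevel_mass_def E_Sigma using fin_E by (simp add: sum.Sigma split_def)
  finally show ?thesis
    unfolding z_def[symmetric] by linarith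
qed

theorem lemmaB1:
  fixes n :: nat
    and S :: "nat \<Rightarrow> 's set"
    and L :: "nat \<Rightarrow> 's \<Rightarrow> 's \<Rightarrow> real"
    and mu ppi :: "nat \<Rightarrow> 's \<Rightarrow> real"
    and p :: "nat \<Rightarrow> real"
    and lam :: "nat \<Rightarrow> nat \<Rightarrow> real"
    and phi :: "nat \<Rightarrow> nat \<Rightarrow> 's \<Rightarrow> real"
    and M M' :: nat
    and e :: "nat \<Rightarrow> (nat \<Rightarrow> nat)"
    and e' :: "nat \<Rightarrow> nat \<times> nat"
  assumes n_pos: "n \<ge> 1"
    and chains: "\<And>i. i < n \<Longrightarrow> generator (S i) (L i) \<and> irreducible_gen (S i) (L i)
                   \<and> stationary (S i) (L i) (ppi i) \<and> reversible (S i) (L i) (ppi i)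
                   \<and> prob_dist (S i) (mu i)"
    and eig: "\<And>i. i < n \<Longrightarrow> eigen_decomp (S i) (L i) (ppi i) (lam i) (phi i)"
    and p_pos: "\<And>i. i < n \<Longrightarrow> p i > 0"
    and p_sum: "(\<Sum>i<n. p i) \<le> 1"
    and e_bij: "bij_betw e {1..M}
                  ((Pi\<^sub>E {..<n} (\<lambda>i. {..<card (S i)})) - {restrict (\<lambda>_. 0) {..<n}})"
    and e_mono: "\<And>l l'. 1 \<le> l \<Longrightarrow> l \<le> l' \<Longrightarrow> l' \<le> M \<Longrightarrow>
                   (\<Sum>i<n. p i * lam i (e l i)) \<le> (\<Sum>i<n. p i * lam i (e l' i))"
    and e'_bij: "bij_betw e' {1..M'} {(i, j). i < n \<and> 1 \<le> j \<and> j < card (S i)}"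
    and e'_mono: "\<And>l l'. 1 \<le> l \<Longrightarrow> l \<le> l' \<Longrightarrow> l' \<le> M' \<Longrightarrow>
                   p (fst (e' l)) * lam (fst (e' l)) (snd (e' l))
                     \<le> p (fst (e' l')) * lam (fst (e' l')) (snd (e' l'))"
  defines "varrho \<equiv> (\<lambda>l. \<Sum>i<n. p i * lam i (e l i))"
    and "psi \<equiv> (\<lambda>l. \<Prod>i<n. \<Sum>x\<in>S i. mu i x * phi i (e l i) x)"
    and "rho \<equiv> (\<lambda>l. p (fst (e' l)) * lam (fst (e' l)) (snd (e' l)))"
    and "vphi \<equiv> (\<lambda>l. \<Sum>x\<in>S (fst (e' l)). mu (fst (e' l)) x * phi (fst (e' l)) (snd (e' l)) x)"
  shows "\<forall>c>0. val_at varrho (first_index M psi c) \<le> val_at rho (first_index M' vphi c)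
              \<and> val_at rho (first_index M' vphi c) \<le> val_at varrho (first_index M psi (exp c - 1))"
proof -
  define m where "m i j = (\<Sum>x\<in>S i. mu i x * phi i j x)" for i j
  have card_pos: "0 < card (S i)" if "i < n" for i
    using chains[OF that] by (simp add: generator_def card_gt_0_iff)
  have lam_0: "lam i 0 = 0" and lam_nonneg: "\<And>j. j < card (S i) \<Longrightarrow> 0 \<le> lam i j" if "i < n" for i
    using eig[OF that] unfolding eigen_decomp_def by (metis le0)+
  have m_0: "m i 0 = 1" if "i < n" for i
    using eig[OF that] chains[OF that] by (simp add: m_def eigen_decomp_def prob_dist_def)
  have mass_eq: "sublevel_mass {1..M} varrho psi r
      = sublevel_mass (Pi\<^sub>E {..<n} (\<lambda>i. {..<card (S i)}) - {restrict (\<lambda>_. 0) {..<n}})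
          (\<lambda>J. \<Sum>i<n. p i * lam i (J i)) (\<lambda>J. \<Prod>i<n. m i (J i)) r" for r
    using sublevel_mass_reindex[OF e_bij] unfolding varrho_def psi_def m_def by simp
  have mass'_eq: "sublevel_mass {1..M'} rho vphi r
      = sublevel_mass {(i, j). i < n \<and> 1 \<le> j \<and> j < card (S i)}
          (\<lambda>q. p (fst q) * lam (fst q) (snd q)) (\<lambda>q. m (fst q) (snd q)) r" for r
    using sublevel_mass_reindex[OF e'_bij] unfolding rho_def vphi_def m_def by simp
  have mass_le: "sublevel_mass {1..M'} rho vphi r \<le> sublevel_mass {1..M} varrho psi r" for r
    unfolding mass_eq mass'_eq
    by (rule sublevel_mass_coordinates_le_product) (simp_all add: card_pos lam_0 m_0)
  have mass_le_exp:
    "1 + sublevel_mass {1..M} varrho psi r \<le> exp (sublevel_mass {1..M'} rho vphi r)" for r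
    unfolding mass_eq mass'_eq
    by (rule sublevel_mass_product_le_exp_coordinates) (simp_all add: less_imp_le p_pos lam_nonneg m_0)
  have mono: "mono_on {1..M} varrho" and mono': "mono_on {1..M'} rho"
    using e_mono e'_mono by (auto intro!: mono_onI simp: varrho_def rho_def)
  show ?thesis
  proof (intro allI impI conjI)
    fix c :: real assume "0 < c"
    show "val_at varrho (first_index M psi c) \<le> val_at rho (first_index M' vphi c)"
      using \<open>0 < c\<close> mass_le
      by (intro val_at_first_index_mono[OF mono mono']) (auto intro: order.strict_trans2)
    have "c < sublevel_mass {1..M'} rho vphi r"
      if "exp c - 1 < sublevel_mass {1..M} varrho psi r" for r
    proof -
      have "exp c < exp (sublevel_mass {1..M'} rho vphi r)"
        using mass_le_exp[of r] that by linarith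
      then show ?thesis
        by simp
    qed
    then show "val_at rho (first_index M' vphi c) \<le> val_at varrho (first_index M psi (exp c - 1))"
      using \<open>0 < c\<close> by (intro val_at_first_index_mono[OF mono' mono]) auto
  qed
qed

end
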